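(* Let $(X,d)$, $\mu$, $Y$ (countable), $f:X\to Y$ be as in the standing setting, and let $\kappa:\mathbb{Z}^+\to\mathbb{Z}^+$ satisfy $\sum_{n=1}^\infty\rho^{\kappa(n)}=\infty$ for every $0<\rho\le1$. Let $\{z_n\}$ be generated by $\mathcal{S}(\kappa,\Phi)$ where $\Phi$ is the non-modal count heuristic $\Phi(x,S)=|V_S(x)|-\operatorname{modefreq}_f(V_S(x))$ with $V_S(x)$ the set of Voronoi neighbors of $x$ with respect to $S$. If $x\in X$ is contained in an $f$-contiguous component of positive $\mu$-measure, then $\zeta_n(x)\to f(x)$ with probability one.
   Context: Standing setting: $(X,d)$ metric space with probability measure $\mu$; $Y$ countable; $f:X\to Y$; $X_y=f^{-1}(y)$; $B_\epsilon(x)$ open ball; $\operatorname{supp}(\mu)=\{x:\mu(B_\epsilon(x))>0\ \forall\epsilon>0\}$. A point $b$ is an $f$-boundary point iff $\mu(B_\epsilon(b)\setminus X_{f(b)})>0$ for all $\epsilon>0$. A set $R\subseteq X$ is $f$-connected iff it is connected and $R\subseteq X_y$ for some $y\in Y$; it is $f$-contiguous iff it is $f$-connected, $R\subseteq\operatorname{supp}(\mu)$, and $R$ contains no $f$-boundary points. An $f$-contiguous component is an $f$-contiguous set maximal under inclusion. Voronoi neighbors: $v\in S$ is a Voronoi neighbor of $x$ w.r.t. $S$ iff there is $c\in X$ with $d(x,c)<d(v,c)\le d(s,c)$ for all $s\in S$; $V_S(x)$ is the set of these. For finite $A\subseteq X$, $\operatorname{modefreq}_f(A)=\max_{y\in Y}|A\cap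 X_y|$ (and $0$ if $A=\emptyset$). Process $\mathcal{S}(\kappa,\Phi)$: $Z_0=\emptyset$; at step $n$ draw $\kappa(n)$ candidates i.i.d. from $\mu$, independent of the past, set $z_n$ to a candidate maximizing $\Phi(\cdot,Z_{n-1})$ (ties uniformly at random), $Z_n=\{z_1,\dots,z_n\}$. Nearest neighbor prediction: $\zeta_n(x)=f(z_\iota)$, $\iota=\arg\min_{i\le n}d(x,z_i)$, ties uniformly at random. *)

theory Defs
  imports "HOL-Probability.Probability"
begin

definition supp_measure :: "'a::metric_space measure \<Rightarrow> 'a set" where
  "supp_measure M = {x. \<forall>e>0. emeasure M (ball x e) > 0}"

definition f_boundary_point :: "'a::metric_space measure \<Rightarrow> ('a \<Rightarrow> 'b) \<Rightarrow> 'a \<Rightarrow> bool" where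
  "f_boundary_point M f b \<longleftrightarrow> (\<forall>e>0. emeasure M (ball b e - f -` {f b}) > 0)"

definition f_connected :: "('a::topological_space \<Rightarrow> 'b) \<Rightarrow> 'a set \<Rightarrow> bool" where
  "f_connected f R \<longleftrightarrow> connected R \<and> (\<exists>y. R \<subseteq> f -` {y})"

definition f_contiguous :: "'a::metric_space measure \<Rightarrow> ('a \<Rightarrow> 'b) \<Rightarrow> 'a set \<Rightarrow> bool" where
  "f_contiguous M f R \<longleftrightarrow> f_connected f R \<and> R \<subseteq> supp_measure M
      \<and> (\<forall>b\<in>R. \<not> f_boundary_point M f b)"

definition f_contiguous_component :: "'a::metric_space measure \<Rightarrow> ('a \<Rightarrow> 'b) \<Rightarrow> 'a set \<Rightarrow> bool" where
  "f_contiguous_component M f R \<longleftrightarrow> f_contiguous M f R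
      \<and> (\<forall>R'. f_contiguous M f R' \<and> R \<subseteq> R' \<longrightarrow> R' = R)"

definition voronoi_neighbors :: "'a::metric_space set \<Rightarrow> 'a \<Rightarrow> 'a set" where
  "voronoi_neighbors S x = {v\<in>S. \<exists>c. dist x c < dist v c \<and> (\<forall>s\<in>S. dist v c \<le> dist s c)}"

definition modefreq :: "('a \<Rightarrow> 'b) \<Rightarrow> 'a set \<Rightarrow> nat" where
  "modefreq f A = (if A = {} then 0 else (SUP y. card (A \<inter> f -` {y})))"

definition nonmodal_count :: "('a::metric_space \<Rightarrow> 'b) \<Rightarrow> 'a \<Rightarrow> 'a set \<Rightarrow> int" where
  "nonmodal_count f x S =
     int (card (voronoi_neighbors S x)) - int (modefreq f (voronoi_neighbors S x))"

text \<open>Uniform random tie breaking: given a finite set of admissible indices and a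
  number u uniformly distributed in [0,1), choose the floor(u * card I)-th element
  of I (in increasing order); this is uniform on I.\<close>
definition pick_uniform :: "nat set \<Rightarrow> real \<Rightarrow> nat" where
  "pick_uniform I u = sorted_list_of_set I ! nat \<lfloor>u * real (card I)\<rfloor>"

definition select_step :: "('a \<Rightarrow> 'a set \<Rightarrow> int) \<Rightarrow> (nat \<Rightarrow> 'a) \<Rightarrow> nat \<Rightarrow> 'a set \<Rightarrow> real \<Rightarrow> 'a" where
  "select_step \<Phi> cs k S u =
     cs (pick_uniform {i. i < k \<and> (\<forall>j<k. \<Phi> (cs j) S \<le> \<Phi> (cs i) S)} u)"

text \<open>zs n = [z_1, ..., z_n].  cand n i is the i-th candidate at step n (only i < kappa n
  are used), U n is the tie-breaking variable of step n.\<close>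
primrec proc_points :: "('a \<Rightarrow> 'a set \<Rightarrow> int) \<Rightarrow> (nat \<Rightarrow> nat) \<Rightarrow> (nat \<Rightarrow> nat \<Rightarrow> 'a)
      \<Rightarrow> (nat \<Rightarrow> real) \<Rightarrow> nat \<Rightarrow> 'a list" where
  "proc_points \<Phi> \<kappa> cand U 0 = []"
| "proc_points \<Phi> \<kappa> cand U (Suc n) =
     proc_points \<Phi> \<kappa> cand U n
     @ [select_step \<Phi> (cand (Suc n)) (\<kappa> (Suc n)) (set (proc_points \<Phi> \<kappa> cand U n)) (U (Suc n))]"

definition nn_predict :: "('a::metric_space \<Rightarrow> 'b) \<Rightarrow> 'a list \<Rightarrow> real \<Rightarrow> 'a \<Rightarrow> 'b" where
  "nn_predict f zs w x =
     f (zs ! pick_uniform {i. i < length zs \<and> (\<forall>j<length zs. dist x (zs ! i) \<le> dist x (zs ! j))} w)"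

text \<open>The underlying probability space: all candidates i.i.d. from M, and two
  independent i.i.d. sequences of Uniform[0,1) tie-breaking variables
  (one for the selection step, one for the prediction).\<close>
definition unif01 :: "real measure" where
  "unif01 = uniform_measure lborel {0..<1}"

definition process_space :: "'a measure
      \<Rightarrow> ((nat \<Rightarrow> nat \<Rightarrow> 'a) \<times> (nat \<Rightarrow> real) \<times> (nat \<Rightarrow> real)) measure" where
  "process_space M =
     (\<Pi>\<^sub>M n\<in>(UNIV::nat set). \<Pi>\<^sub>M i\<in>(UNIV::nat set). M)
     \<Otimes>\<^sub>M ((\<Pi>\<^sub>M n\<in>(UNIV::nat set). unif01) \<Otimes>\<^sub>M (\<Pi>\<^sub>M n\<in>(UNIV::nat set). unif01))"

definition zeta :: "('a::metric_space \<Rightarrow> 'b) \<Rightarrow> ('a \<Rightarrow> 'a set \<Rightarrow> int) \<Rightarrow> (nat \<Rightarrow> nat)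
      \<Rightarrow> ((nat \<Rightarrow> nat \<Rightarrow> 'a) \<times> (nat \<Rightarrow> real) \<times> (nat \<Rightarrow> real)) \<Rightarrow> nat \<Rightarrow> 'a \<Rightarrow> 'b" where
  "zeta f \<Phi> \<kappa> \<omega> n x =
     nn_predict f (proc_points \<Phi> \<kappa> (fst \<omega>) (fst (snd \<omega>)) n) (snd (snd \<omega>) n) x"

end

theory Submission
  imports Defs
begin

text \<open>Since x lies in a contiguous component, it is
  not an f-boundary point, so some ball B(x, e) meets the other classes only in a
  null set; almost surely no candidate ever lands there. Since x is in the support,
  \<rho> = \<mu>(B(x, e)) > 0, and the events "all \<kappa>(n) candidates of step n lie in B(x, e)"
  are independent with probabilities \<rho>^\<kappa>(n), whose sum diverges; so almost surely
  one of them occurs (second Borel-Cantelli lemma). From that step on the nearest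
  sample point to x lies in B(x, e), hence carries the label f x.\<close>

lemma pick_uniform_mem:
  assumes "finite I" "I \<noteq> {}" "u \<in> {0..<1}"
  shows "pick_uniform I u \<in> I"
proof -
  have "card I > 0" using assms by auto
  then have "u * real (card I) < real (card I)" using assms by simp
  then have "\<lfloor>u * real (card I)\<rfloor> < int (card I)" by (simp add: floor_less_iff)
  moreover have "0 \<le> \<lfloor>u * real (card I)\<rfloor>" using assms by simp
  ultimately have "nat \<lfloor>u * real (card I)\<rfloor> < length (sorted_list_of_set I)"
    by (simp add: nat_less_iff)
  then have "sorted_list_of_set I ! nat \<lfloor>u * real (card I)\<rfloor> \<in> set (sorted_list_of_set I)"
    by (rule nth_mem)
  then show ?thesis using assms(1) unfolding pick_uniform_def by simp
qed

lemma select_step_is_candidate: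
  assumes "k \<ge> 1" "u \<in> {0..<1}"
  shows "\<exists>j<k. select_step \<Phi> cs k S u = cs j"
proof -
  let ?I = "{i. i < k \<and> (\<forall>j<k. \<Phi> (cs j) S \<le> \<Phi> (cs i) S)}"
  have fin: "finite ((\<lambda>j. \<Phi> (cs j) S) ` {..<k})" by simp
  have "0 \<in> {..<k}" using assms by simp
  then have ne: "(\<lambda>j. \<Phi> (cs j) S) ` {..<k} \<noteq> {}" by blast
  obtain i where "i < k" "\<Phi> (cs i) S = Max ((\<lambda>j. \<Phi> (cs j) S) ` {..<k})"
    using Max_in[OF fin ne] by auto
  then have "i \<in> ?I" using Max_ge[OF fin] by auto
  then have "pick_uniform ?I u \<in> ?I" using assms by (intro pick_uniform_mem) auto
  then show ?thesis unfolding select_step_def by auto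
qed

lemma length_proc_points [simp]: "length (proc_points \<Phi> \<kappa> cand U n) = n"
  by (induction n) auto

lemma nth_proc_points:
  "k < n \<Longrightarrow> proc_points \<Phi> \<kappa> cand U n ! k =
     select_step \<Phi> (cand (Suc k)) (\<kappa> (Suc k)) (set (proc_points \<Phi> \<kappa> cand U k)) (U (Suc k))"
  by (induction n) (auto simp: nth_append less_Suc_eq)

lemma proc_points_nth_is_candidate:
  "k < n \<Longrightarrow> \<exists>j. proc_points \<Phi> \<kappa> cand U n ! k = cand (Suc k) j"
  unfolding nth_proc_points select_step_def by blast

lemma nn_predict_nearest:
  assumes "zs \<noteq> []" "w \<in> {0..<1}"
  obtains p where "p < length zs" "\<forall>j<length zs. dist x (zs ! p) \<le> dist x (zs ! j)"
    "nn_predict f zs w x = f (zs ! p)"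
proof -
  define I where "I = {i. i < length zs \<and> (\<forall>j<length zs. dist x (zs ! i) \<le> dist x (zs ! j))}"
  have fin: "finite ((\<lambda>j. dist x (zs ! j)) ` {..<length zs})" by simp
  have "0 \<in> {..<length zs}" using assms by simp
  then have ne: "(\<lambda>j. dist x (zs ! j)) ` {..<length zs} \<noteq> {}" by blast
  obtain i where "i < length zs" "dist x (zs ! i) = Min ((\<lambda>j. dist x (zs ! j)) ` {..<length zs})"
    using Min_in[OF fin ne] by auto
  then have "i \<in> I" using Min_le[OF fin] by (auto simp: I_def)
  moreover have "finite I" by (simp add: I_def)
  ultimately have "pick_uniform I w \<in> I" using assms by (intro pick_uniform_mem) auto
  then show ?thesis using that unfolding nn_predict_def I_def by auto
qed

lemma nn_predict_proc_points_eq: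
  fixes x :: "'a::metric_space" and f :: "'a \<Rightarrow> 'b"
  assumes avoid: "\<forall>n i. cand n i \<notin> ball x e - f -` {f x}"
    and good: "\<forall>i<\<kappa> (Suc m). cand (Suc m) i \<in> ball x e"
    and kappa: "\<kappa> (Suc m) \<ge> 1" and U: "U (Suc m) \<in> {0..<1}"
    and w: "w \<in> {0..<1}" and "m < n"
  shows "nn_predict f (proc_points \<Phi> \<kappa> cand U n) w x = f x"
proof -
  define zs where "zs = proc_points \<Phi> \<kappa> cand U n"
  obtain j where "j < \<kappa> (Suc m)" "zs ! m = cand (Suc m) j"
    using select_step_is_candidate[OF kappa U, of \<Phi> "cand (Suc m)"] \<open>m < n\<close>
    by (auto simp: zs_def nth_proc_points)
  then have "dist x (zs ! m) < e" using good by auto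
  have "length zs = n" by (simp add: zs_def)
  then have "zs \<noteq> []" using \<open>m < n\<close> by auto
  then obtain p where p: "p < length zs" "\<forall>j<length zs. dist x (zs ! p) \<le> dist x (zs ! j)"
    "nn_predict f zs w x = f (zs ! p)"
    by (rule nn_predict_nearest[OF _ w])
  have "zs ! p \<in> ball x e"
    using p(2) \<open>dist x (zs ! m) < e\<close> \<open>length zs = n\<close> \<open>m < n\<close> by fastforce
  have "p < n" using p(1) \<open>length zs = n\<close> by simp
  then obtain j' where "zs ! p = cand (Suc p) j'"
    using proc_points_nth_is_candidate unfolding zs_def by blast
  then have "zs ! p \<notin> ball x e - f -` {f x}" using avoid by simp
  with \<open>zs ! p \<in> ball x e\<close> have "f (zs ! p) = f x" by blast
  then show ?thesis using p(3) by (simp add: zs_def)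
qed

lemma eventually_nn_predict_proc_points_eq:
  fixes x :: "'a::metric_space" and f :: "'a \<Rightarrow> 'b"
  assumes avoid: "\<forall>n i. cand n i \<notin> ball x e - f -` {f x}"
    and good: "\<forall>i<\<kappa> (Suc m). cand (Suc m) i \<in> ball x e" and kappa: "\<kappa> (Suc m) \<ge> 1"
    and U: "\<forall>n. U n \<in> {0..<1}" and W: "\<forall>n. W n \<in> {0..<1}"
  shows "eventually (\<lambda>n. nn_predict f (proc_points \<Phi> \<kappa> cand U n) (W n) x = f x) sequentially"
  unfolding eventually_sequentially
proof (intro exI allI impI)
  fix n assume "Suc m \<le> n"
  then show "nn_predict f (proc_points \<Phi> \<kappa> cand U n) (W n) x = f x"
    using U W
    by (intro nn_predict_proc_points_eq[where cand = cand and \<kappa> = \<kappa> and m = m, OF avoid good kappa])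
      auto
qed

lemma prod_one_minus_le_exp_neg_sum:
  fixes a :: "nat \<Rightarrow> real"
  assumes "\<And>k. 0 \<le> a k" "\<And>k. a k \<le> 1"
  shows "(\<Prod>k\<le>N. 1 - a k) \<le> exp (- (\<Sum>k\<le>N. a k))"
proof (induction N)
  case 0 show ?case using exp_ge_add_one_self[of "- a 0"] by simp
next
  case (Suc N)
  have "(\<Prod>k\<le>Suc N. 1 - a k) = (\<Prod>k\<le>N. 1 - a k) * (1 - a (Suc N))" by simp
  also have "\<dots> \<le> exp (- (\<Sum>k\<le>N. a k)) * exp (- a (Suc N))"
    using Suc.IH assms exp_ge_add_one_self[of "- a (Suc N)"] by (intro mult_mono) auto
  also have "\<dots> = exp (- (\<Sum>k\<le>Suc N. a k))" by (simp add: exp_add[symmetric])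
  finally show ?case .
qed

lemma measure_PiM_Collect_UNIV:
  assumes "\<And>i. prob_space (M i)" "finite J" "\<And>i. i \<in> J \<Longrightarrow> X i \<in> sets (M i)"
  shows "measure (PiM UNIV M) {x\<in>space (PiM UNIV M). \<forall>i\<in>J. x i \<in> X i} = (\<Prod>i\<in>J. measure (M i) (X i))"
proof -
  interpret product_prob_space M UNIV
    by (intro product_prob_space.intro product_sigma_finite.intro product_prob_space_axioms.intro
          prob_space_imp_sigma_finite assms)
  have "{x\<in>space (PiM UNIV M). \<forall>i\<in>J. x i \<in> X i} = prod_emb UNIV M J (PiE J X)"
    unfolding prod_emb_def by (auto simp: space_PiM Pi_iff)
  then show ?thesis using measure_PiM_emb[of J X] assms by simp
qed

lemma AE_PiM_ex_component_in:
  assumes N: "prob_space N" and A: "\<And>n. A n \<in> sets N"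
    and diverge: "\<not> summable (\<lambda>n. measure N (A n))"
  shows "AE \<omega> in PiM UNIV (\<lambda>_::nat. N). \<exists>n. \<omega> n \<in> A n"
proof -
  let ?P = "PiM UNIV (\<lambda>_::nat. N)"
  interpret P: prob_space ?P using N by (rule prob_space_PiM)
  define Miss where "Miss = {\<omega>\<in>space ?P. \<forall>n. \<omega> n \<notin> A n}"
  have Miss_sets: "Miss \<in> sets ?P" unfolding Miss_def using A by measurable
  define a where "a n = measure N (A n)" for n
  have a_bounds: "0 \<le> a n" "a n \<le> 1" for n
    unfolding a_def using prob_space.prob_le_1[OF N] by auto
  have Miss_le: "measure ?P Miss \<le> exp (- (\<Sum>k\<le>K. a k))" for K
  proof -
    define G where "G = {\<omega>\<in>space ?P. \<forall>n\<in>{..K}. \<omega> n \<in> space N - A n}"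
    have "G \<in> sets ?P" unfolding G_def using A by measurable
    moreover have "Miss \<subseteq> G" by (auto simp: Miss_def G_def space_PiM)
    ultimately have "measure ?P Miss \<le> measure ?P G" by (intro P.finite_measure_mono)
    also have "\<dots> = (\<Prod>k\<le>K. 1 - a k)"
      unfolding G_def a_def using A N
      by (subst measure_PiM_Collect_UNIV) (auto simp: prob_space.prob_compl)
    also have "\<dots> \<le> exp (- (\<Sum>k\<le>K. a k))"
      using a_bounds by (rule prod_one_minus_le_exp_neg_sum)
    finally show ?thesis .
  qed
  have "measure ?P Miss = 0"
  proof (rule ccontr)
    assume "measure ?P Miss \<noteq> 0"
    then have Miss_pos: "measure ?P Miss > 0" using measure_nonneg[of ?P Miss] by linarith
    obtain K where "(\<Sum>k\<le>K. a k) > - ln (measure ?P Miss)"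
      using diverge bounded_imp_summable[of a "- ln (measure ?P Miss)"] a_bounds
      unfolding a_def by (meson not_le)
    then have "exp (- (\<Sum>k\<le>K. a k)) < exp (ln (measure ?P Miss))"
      by (intro exp_less_mono) linarith
    then show False using Miss_le[of K] Miss_pos by simp
  qed
  then have "Miss \<in> null_sets ?P"
    using Miss_sets P.emeasure_eq_measure by (simp add: null_sets_def)
  then show ?thesis
    by (rule AE_I') (auto simp: Miss_def)
qed

lemma AE_PiM_all_components:
  assumes "prob_space M" "countable I" "AE x in M. P x"
  shows "AE \<omega> in PiM I (\<lambda>_. M). \<forall>i\<in>I. P (\<omega> i)"
  using assms AE_PiM_component[of I "\<lambda>_. M" _ P] by (simp add: AE_ball_countable)

lemma AE_pair_fst:
  assumes "sigma_finite_measure B" "AE x in A. P x"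
  shows "AE z in A \<Otimes>\<^sub>M B. P (fst z)"
proof -
  from assms(2) obtain N where N: "N \<in> null_sets A" "{x\<in>space A. \<not> P x} \<subseteq> N"
    by (auto simp: eventually_ae_filter)
  interpret B: sigma_finite_measure B by fact
  have "emeasure (A \<Otimes>\<^sub>M B) (N \<times> space B) = emeasure A N * emeasure B (space B)"
    using N by (intro B.emeasure_pair_measure_Times) auto
  then have "N \<times> space B \<in> null_sets (A \<Otimes>\<^sub>M B)" using N by (auto simp: null_sets_def)
  then show ?thesis by (rule AE_I') (use N in \<open>auto simp: space_pair_measure\<close>)
qed

lemma AE_pair_snd:
  assumes "sigma_finite_measure B" "AE y in B. P y"
  shows "AE z in A \<Otimes>\<^sub>M B. P (snd z)"
proof -
  from assms(2) obtain N where N: "N \<in> null_sets B" "{y\<in>space B. \<not> P y} \<subseteq> N"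
    by (auto simp: eventually_ae_filter)
  interpret B: sigma_finite_measure B by fact
  have "emeasure (A \<Otimes>\<^sub>M B) (space A \<times> N) = emeasure A (space A) * emeasure B N"
    using N by (intro B.emeasure_pair_measure_Times) auto
  then have "space A \<times> N \<in> null_sets (A \<Otimes>\<^sub>M B)" using N by (auto simp: null_sets_def)
  then show ?thesis by (rule AE_I') (use N in \<open>auto simp: space_pair_measure\<close>)
qed

lemma prob_space_unif01: "prob_space unif01"
  unfolding unif01_def by (intro prob_space_uniform_measure) auto

lemma AE_unif01_sequence: "AE u in PiM UNIV (\<lambda>_::nat. unif01). \<forall>n. u n \<in> {0..<1}"
proof -
  have "AE y in unif01. y \<in> {0..<1}"
    unfolding unif01_def by (subst AE_uniform_measure) auto
  from AE_PiM_all_components[OF prob_space_unif01 _ this, of "UNIV :: nat set"] show ?thesis by simp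
qed

lemma AE_process_space:
  assumes "AE cand in PiM UNIV (\<lambda>_::nat. PiM UNIV (\<lambda>_::nat. M)). P cand"
  shows "AE \<omega> in process_space M.
           P (fst \<omega>) \<and> (\<forall>n. fst (snd \<omega>) n \<in> {0..<1}) \<and> (\<forall>n. snd (snd \<omega>) n \<in> {0..<1})"
proof -
  let ?Mu = "PiM UNIV (\<lambda>_::nat. unif01)"
  have Mu: "sigma_finite_measure ?Mu"
    by (intro prob_space_imp_sigma_finite prob_space_PiM prob_space_unif01)
  have Muu: "sigma_finite_measure (?Mu \<Otimes>\<^sub>M ?Mu)"
    by (intro prob_space_imp_sigma_finite prob_space_pair prob_space_PiM prob_space_unif01)
  show ?thesis
    unfolding process_space_def
    using AE_pair_fst[OF Muu assms]
      AE_pair_snd[OF Muu AE_pair_fst[OF Mu AE_unif01_sequence]]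
      AE_pair_snd[OF Muu AE_pair_snd[OF Mu AE_unif01_sequence]]
    by eventually_elim auto
qed

lemma contiguous_component_null_ball:
  fixes M :: "'a::metric_space measure"
  assumes borel: "sets M = sets borel" and f_meas: "f \<in> M \<rightarrow>\<^sub>M count_space UNIV"
    and comp: "f_contiguous_component M f C" and "x \<in> C"
  obtains e where "ball x e - f -` {f x} \<in> null_sets M" "emeasure M (ball x e) > 0"
proof -
  have "\<not> f_boundary_point M f x" and supp: "x \<in> supp_measure M"
    using comp \<open>x \<in> C\<close> unfolding f_contiguous_component_def f_contiguous_def by auto
  then obtain e where e: "e > 0" "emeasure M (ball x e - f -` {f x}) = 0"
    unfolding f_boundary_point_def by (auto simp: not_less)
  have "f -` {f x} \<in> sets M"
    using measurable_sets[OF f_meas, of "{f x}"] sets_eq_imp_space_eq[OF borel] by simp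
  then have "ball x e - f -` {f x} \<in> null_sets M" using e(2) borel by (simp add: null_sets_def)
  moreover have "emeasure M (ball x e) > 0"
    using supp e(1) unfolding supp_measure_def by blast
  ultimately show thesis by (rule that)
qed

lemma AE_candidates_not_in_null:
  assumes "prob_space M" "N \<in> null_sets M"
  shows "AE cand in PiM UNIV (\<lambda>_::nat. PiM UNIV (\<lambda>_::nat. M)). \<forall>n i. cand n i \<notin> N"
proof -
  from AE_PiM_all_components[OF assms(1) _ AE_not_in[OF assms(2)], of "UNIV :: nat set"]
  have "AE d in PiM UNIV (\<lambda>_::nat. M). \<forall>i. d i \<notin> N" by simp
  from AE_PiM_all_components[OF prob_space_PiM[OF assms(1)] _ this, of "UNIV :: nat set"]
  show ?thesis by simp
qed

lemma AE_candidates_block_in: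
  assumes prob: "prob_space M" and B: "B \<in> sets M"
    and diverge: "\<not> summable (\<lambda>n. measure M B ^ \<kappa> (Suc n))"
  shows "AE cand in PiM UNIV (\<lambda>_::nat. PiM UNIV (\<lambda>_::nat. M)).
           \<exists>m. \<forall>i<\<kappa> (Suc m). cand (Suc m) i \<in> B"
proof -
  \<comment> \<open>Steps are numbered from 1: the candidate block with index 0 is never drawn.\<close>
  define hit where
    "hit n = {d\<in>space (PiM UNIV (\<lambda>_::nat. M)). n \<noteq> 0 \<and> (\<forall>i\<in>{..<\<kappa> n}. d i \<in> B)}" for n
  have [measurable]: "hit n \<in> sets (PiM UNIV (\<lambda>_. M))" for n unfolding hit_def using B by measurable
  have "measure (PiM UNIV (\<lambda>_. M)) (hit (Suc n)) = measure M B ^ \<kappa> (Suc n)" for n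
    using measure_PiM_Collect_UNIV[of "\<lambda>_. M" "{..<\<kappa> (Suc n)}" "\<lambda>_. B"] prob B
    by (simp add: hit_def)
  then have "\<not> summable (\<lambda>n. measure (PiM UNIV (\<lambda>_. M)) (hit n))"
    using diverge by (subst summable_Suc_iff[symmetric]) simp
  then have "AE cand in PiM UNIV (\<lambda>_::nat. PiM UNIV (\<lambda>_::nat. M)). \<exists>n. cand n \<in> hit n"
    by (intro AE_PiM_ex_component_in prob_space_PiM prob) auto
  then show ?thesis
  proof (rule AE_mp[OF _ AE_I2[OF impI]])
    fix cand assume "\<exists>n. cand n \<in> hit n"
    then obtain n where "n \<noteq> 0" "\<forall>i<\<kappa> n. cand n i \<in> B" by (auto simp: hit_def)
    then show "\<exists>m. \<forall>i<\<kappa> (Suc m). cand (Suc m) i \<in> B" using not0_implies_Suc by blast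
  qed
qed

theorem theorem3:
  fixes M :: "'a::metric_space measure"
    and f :: "'a \<Rightarrow> 'b::countable"
    and \<kappa> :: "nat \<Rightarrow> nat"
    and x :: 'a
  assumes prob: "prob_space M"
    and borel: "sets M = sets borel"
    and f_meas: "f \<in> M \<rightarrow>\<^sub>M count_space UNIV"
    and kappa_pos: "\<forall>n\<ge>1. \<kappa> n \<ge> 1"
    and kappa_div: "\<forall>\<rho>::real. 0 < \<rho> \<and> \<rho> \<le> 1 \<longrightarrow> \<not> summable (\<lambda>n. \<rho> ^ \<kappa> (Suc n))"
    and comp: "f_contiguous_component M f C"
    and pos: "emeasure M C > 0"
    and xC: "x \<in> C"
  shows "AE \<omega> in process_space M.
           eventually (\<lambda>n. zeta f (nonmodal_count f) \<kappa> \<omega> n x = f x) sequentially"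
proof -
  interpret M: prob_space M by (rule prob)
  obtain e where null: "ball x e - f -` {f x} \<in> null_sets M"
    and ball_pos: "emeasure M (ball x e) > 0"
    using contiguous_component_null_ball[OF borel f_meas comp xC] .
  have ball_sets: "ball x e \<in> sets M" using borel by simp
  have "0 < measure M (ball x e)" "measure M (ball x e) \<le> 1"
    using ball_pos M.emeasure_eq_measure M.prob_le_1 by auto
  then have "\<not> summable (\<lambda>n. measure M (ball x e) ^ \<kappa> (Suc n))" using kappa_div by blast
  with AE_candidates_not_in_null[OF prob null] AE_candidates_block_in[OF prob ball_sets]
  have "AE \<omega> in process_space M.
      ((\<forall>n i. fst \<omega> n i \<notin> ball x e - f -` {f x})
        \<and> (\<exists>m. \<forall>i<\<kappa> (Suc m). fst \<omega> (Suc m) i \<in> ball x e))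
      \<and> (\<forall>n. fst (snd \<omega>) n \<in> {0..<1}) \<and> (\<forall>n. snd (snd \<omega>) n \<in> {0..<1})"
    by (intro AE_process_space AE_conjI)
  then show ?thesis
  proof eventually_elim
    case (elim \<omega>)
    then obtain m where good: "\<forall>i<\<kappa> (Suc m). fst \<omega> (Suc m) i \<in> ball x e" by blast
    have "\<kappa> (Suc m) \<ge> 1" using kappa_pos by simp
    with elim good show ?case
      unfolding zeta_def by (intro eventually_nn_predict_proc_points_eq) blast+
  qed
qed

end
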